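(* For all $\mathbf x,\mathbf y\in\Omega$, $|g(\mathbf x)\wedge g(\mathbf y)|\ge|\mathbf x\wedge\mathbf y|-2$. In other words, for $k\ge1$, the first $k$ letters of $g(\mathbf x)$ are determined by the first $k+2$ letters of $\mathbf x$.
   Context: Let $\Sigma=\{1,\dots,N\}$ with $N\ge4$, and let $\tau,\kappa,\alpha,\gamma\in\Sigma$ be distinct except that $\tau=\alpha$ is allowed. $\Sigma^*$ denotes finite words, $a^k$ the word of $k$ copies of $a$, $\Omega=\{\omega\kappa^\infty:\omega\in\Sigma^*\}$, and $\mathbf x\wedge\mathbf y$ the maximal common prefix, $|\cdot|$ its length. Let $\mathcal C_M=\{\tau\gamma^k:k\ge2\}\cup\{\kappa\alpha^k\kappa\gamma:k\ge0\}$ and $\mathcal C_{M'}=\{\kappa\alpha^k\kappa\gamma:k\ge0\}\cup\{\kappa\alpha^k\kappa\gamma\gamma:k\ge0\}\cup\{\tau\gamma\gamma\}$; letters of $\Sigma$ are one-letter words. The $M$-decomposition of $\mathbf x\in\Omega$ is $\mathbf x=X_1X_2\cdots$ where each $X_k$ is the longest prefix of the remaining tail $X_kX_{k+1}\cdots$ lying in $\mathcal C_M\cup\Sigma$. Define $g_0:\mathcal C_M\cup\Sigma\to\mathcal C_{M'}\cup\Sigma$ by $\tau\gamma^k\mapsto\kappa\alpha^{k-2}\kappa\gamma$ ($k\ge2$), $\kappa\alpha^k\kappa\gamma\mapsto\kappa\alpha^{k-1}\kappa\gamma\gamma$ ($k\ge1$), $\kappa\kappa\gamma\mapsto\tau\gamma\gamma$,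 $i\mapsto i$ ($i\in\Sigma$), and $g:\Omega\to\Omega$ by $g(\mathbf x)=\prod_{j\ge1}g_0(X_j)$ (concatenation). *)

theory Defs
  imports Main "HOL-Library.Extended_Nat"
begin

type_synonym word = "nat \<Rightarrow> nat"

definition Sigma :: "nat \<Rightarrow> nat set" where
  "Sigma N = {1..N}"

definition Omega :: "nat \<Rightarrow> nat \<Rightarrow> word set" where
  "Omega N \<kappa> = {x. (\<forall>i. x i \<in> Sigma N) \<and> (\<exists>n. \<forall>i\<ge>n. x i = \<kappa>)}"

text \<open>Membership in C_M union Sigma (letters as one-letter words).\<close>
definition inCM :: "nat \<Rightarrow> nat \<Rightarrow> nat \<Rightarrow> nat \<Rightarrow> nat \<Rightarrow> nat list \<Rightarrow> bool" where
  "inCM N \<tau> \<kappa> \<alpha> \<gamma> w \<longleftrightarrow>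
     (\<exists>k\<ge>2. w = \<tau> # replicate k \<gamma>) \<or>
     (\<exists>k. w = \<kappa> # replicate k \<alpha> @ [\<kappa>, \<gamma>]) \<or>
     (\<exists>i\<in>Sigma N. w = [i])"

definition g0 :: "nat \<Rightarrow> nat \<Rightarrow> nat \<Rightarrow> nat \<Rightarrow> nat list \<Rightarrow> nat list" where
  "g0 \<tau> \<kappa> \<alpha> \<gamma> w =
     (if (\<exists>k\<ge>2. w = \<tau> # replicate k \<gamma>)
      then \<kappa> # replicate (length w - 3) \<alpha> @ [\<kappa>, \<gamma>]
      else if (\<exists>k\<ge>1. w = \<kappa> # replicate k \<alpha> @ [\<kappa>, \<gamma>])
      then \<kappa> # replicate (length w - 4) \<alpha> @ [\<kappa>, \<gamma>, \<gamma>]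
      else if w = [\<kappa>, \<kappa>, \<gamma>] then [\<tau>, \<gamma>, \<gamma>]
      else w)"

definition blen :: "nat \<Rightarrow> nat \<Rightarrow> nat \<Rightarrow> nat \<Rightarrow> nat \<Rightarrow> word \<Rightarrow> nat" where
  "blen N \<tau> \<kappa> \<alpha> \<gamma> x = (GREATEST n. inCM N \<tau> \<kappa> \<alpha> \<gamma> (map x [0..<n]))"

text \<open>Starting positions of the blocks X_1, X_2, ... of the M-decomposition (0-indexed).\<close>
fun bpos :: "nat \<Rightarrow> nat \<Rightarrow> nat \<Rightarrow> nat \<Rightarrow> nat \<Rightarrow> word \<Rightarrow> nat \<Rightarrow> nat" where
  "bpos N \<tau> \<kappa> \<alpha> \<gamma> x 0 = 0"
| "bpos N \<tau> \<kappa> \<alpha> \<gamma> x (Suc j) =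
     bpos N \<tau> \<kappa> \<alpha> \<gamma> x j + blen N \<tau> \<kappa> \<alpha> \<gamma> (\<lambda>i. x (bpos N \<tau> \<kappa> \<alpha> \<gamma> x j + i))"

definition block :: "nat \<Rightarrow> nat \<Rightarrow> nat \<Rightarrow> nat \<Rightarrow> nat \<Rightarrow> word \<Rightarrow> nat \<Rightarrow> nat list" where
  "block N \<tau> \<kappa> \<alpha> \<gamma> x j =
     map (\<lambda>i. x (bpos N \<tau> \<kappa> \<alpha> \<gamma> x j + i))
         [0..<blen N \<tau> \<kappa> \<alpha> \<gamma> (\<lambda>i. x (bpos N \<tau> \<kappa> \<alpha> \<gamma> x j + i))]"

text \<open>g(x) = g_0(X_1) g_0(X_2) ... ; every g_0-image is nonempty, so the i-th letter
  lies within the images of the first i+1 blocks.\<close>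
definition gmap :: "nat \<Rightarrow> nat \<Rightarrow> nat \<Rightarrow> nat \<Rightarrow> nat \<Rightarrow> word \<Rightarrow> word" where
  "gmap N \<tau> \<kappa> \<alpha> \<gamma> x =
     (\<lambda>i. concat (map (\<lambda>j. g0 \<tau> \<kappa> \<alpha> \<gamma> (block N \<tau> \<kappa> \<alpha> \<gamma> x j)) [0..<Suc i]) ! i)"

definition lcp :: "word \<Rightarrow> word \<Rightarrow> enat" where
  "lcp x y = (if x = y then \<infinity> else enat (LEAST i. x i \<noteq> y i))"

end

theory Submission
  imports Defs
begin

(*
  The map g0 preserves lengths, so g(x) is obtained from x block by block. Look at the first n
  letters of x. Either they determine the first block X1 (then they determine g0(X1) as well, and
  we recurse on the tail with n - |X1| letters), or they do not. The latter happens only when x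
  begins with \<tau> \<gamma>^k where k \<ge> n - 1, with \<kappa> \<alpha>^k \<kappa> \<gamma> where k \<ge> n - 2, or with the
  single-letter block \<kappa> followed by \<alpha>^(n-2); in each of these cases g(x) begins with
  \<kappa> \<alpha>^(n-3), whatever comes next.
*)

lemma enat_le_lcp_iff: "enat n \<le> lcp x y \<longleftrightarrow> (\<forall>i<n. x i = y i)"
proof (cases "x = y")
  case False
  then have "\<exists>i. x i \<noteq> y i"
    by (auto simp: fun_eq_iff)
  then have "x (LEAST i. x i \<noteq> y i) \<noteq> y (LEAST i. x i \<noteq> y i)"
    by (rule LeastI_ex)
  with False show ?thesis
    by (auto simp: lcp_def intro: Least_le) (meson leD less_le_trans not_less_Least)
qed (simp add: lcp_def)

lemma lcp_diff_le_lcp: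
  assumes "\<And>n. \<forall>i<n. x i = y i \<Longrightarrow> \<forall>i<n - d. u i = v i"
  shows "lcp x y - enat d \<le> lcp u v"
proof (cases "lcp x y")
  case (enat m)
  then have "\<forall>i<m - d. u i = v i"
    using assms enat_le_lcp_iff[of m x y] by simp
  then show ?thesis
    using enat enat_le_lcp_iff by simp
next
  case infinity
  have "u = v"
  proof
    fix i
    show "u i = v i"
      using assms[of "Suc i + d"] enat_le_lcp_iff[of "Suc i + d" x y] infinity by simp
  qed
  then show ?thesis
    by (simp add: lcp_def)
qed

lemma nth_concat_map_upt_stable:
  assumes "\<And>j. f j \<noteq> []" and "i < m"
  shows "concat (map f [0..<m]) ! i = concat (map f [0..<Suc i]) ! i"
proof -
  have "Suc i \<le> length (concat (map f [0..<Suc i]))"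
  proof (induction i)
    case (Suc i)
    then show ?case
      using assms(1)[of "Suc i"] by (cases "f (Suc i)") auto
  qed (simp add: assms(1) Suc_le_eq)
  moreover have "concat (map f [0..<m]) = concat (map f [0..<Suc i]) @ concat (map f [Suc i..<m])"
    using assms(2) by (metis Suc_leI concat_append le0 map_append upt_add_eq_append le_add_diff_inverse)
  ultimately show ?thesis
    by (metis Suc_le_eq nth_append)
qed

lemma map_upt_eq_iff: "map z [0..<n] = ws \<longleftrightarrow> n = length ws \<and> (\<forall>i<n. z i = ws ! i)"
  by (auto simp: list_eq_iff_nth_eq)

lemma nth_Cons_replicate: "i \<le> k \<Longrightarrow> (a # replicate k b @ ws) ! i = (if i = 0 then a else b)"
  by (cases i) (auto simp: nth_append)

lemma map_upt_eq_Cons_replicate: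
  "map z [0..<k + 1] = a # replicate k b \<longleftrightarrow> z 0 = a \<and> (\<forall>i\<in>{1..k}. z i = b)"
proof -
  have "map z [0..<k + 1] = a # replicate k b \<longleftrightarrow> (\<forall>i\<le>k. z i = (if i = 0 then a else b))"
    using nth_Cons_replicate[of _ k a b "[]"]
    by (simp del: upt_Suc add: map_upt_eq_iff less_Suc_eq_le)
  also have "\<dots> \<longleftrightarrow> z 0 = a \<and> (\<forall>i\<in>{1..k}. z i = b)"
    by (metis atLeastAtMost_iff le0 le_zero_eq not_one_le_zero One_nat_def Suc_leI neq0_conv)
  finally show ?thesis .
qed

lemma all_less_add_3_iff: "(\<forall>i<(k::nat) + 3. P i) \<longleftrightarrow> (\<forall>i\<le>k. P i) \<and> P (k + 1) \<and> P (k + 2)"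
proof -
  have "i < k + 3 \<longleftrightarrow> i \<le> k \<or> i = k + 1 \<or> i = k + 2" for i
    by linarith
  then show ?thesis
    by blast
qed

definition shift :: "nat \<Rightarrow> word \<Rightarrow> word" where
  "shift p x = (\<lambda>i. x (p + i))"

lemma shift_apply [simp]: "shift p x i = x (p + i)"
  by (simp add: shift_def)

lemma shift_shift [simp]: "shift a (shift b x) = shift (b + a) x"
  by (simp add: shift_def add.assoc)

lemma shift_0 [simp]: "shift 0 x = x"
  by (simp add: shift_def)

lemma shift_in_Omega: "x \<in> Omega N \<kappa> \<Longrightarrow> shift p x \<in> Omega N \<kappa>"
  by (auto simp: Omega_def) (metis le_add2 le_trans)

locale M_decomposition =
  fixes N \<tau> \<kappa> \<alpha> \<gamma> :: nat
  assumes tau_ne_kappa: "\<tau> \<noteq> \<kappa>" and kappa_ne_alpha: "\<kappa> \<noteq> \<alpha>"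
    and kappa_ne_gamma: "\<kappa> \<noteq> \<gamma>" and alpha_ne_gamma: "\<alpha> \<noteq> \<gamma>"
begin

abbreviation "\<Omega> \<equiv> Omega N \<kappa>"
abbreviation "bl \<equiv> blen N \<tau> \<kappa> \<alpha> \<gamma>"
abbreviation "g\<^sub>0 \<equiv> g0 \<tau> \<kappa> \<alpha> \<gamma>"
abbreviation "g \<equiv> gmap N \<tau> \<kappa> \<alpha> \<gamma>"

definition first_block :: "word \<Rightarrow> nat list" where
  "first_block z = map z [0..<bl z]"

definition tau_run :: "word \<Rightarrow> nat \<Rightarrow> bool" where
  "tau_run z k \<longleftrightarrow> 2 \<le> k \<and> z 0 = \<tau> \<and> (\<forall>i\<in>{1..k}. z i = \<gamma>) \<and> z (k + 1) \<noteq> \<gamma>"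

definition kappa_block :: "word \<Rightarrow> nat \<Rightarrow> bool" where
  "kappa_block z k \<longleftrightarrow> z 0 = \<kappa> \<and> (\<forall>i\<in>{1..k}. z i = \<alpha>) \<and> z (k + 1) = \<kappa> \<and> z (k + 2) = \<gamma>"

lemma bpos_Suc_shift:
  "bpos N \<tau> \<kappa> \<alpha> \<gamma> x (Suc j) = bl x + bpos N \<tau> \<kappa> \<alpha> \<gamma> (shift (bl x) x) j"
  by (induction j) (simp_all add: shift_def add.assoc)

lemma block_eq_first_block:
  "block N \<tau> \<kappa> \<alpha> \<gamma> x j = first_block (shift (bpos N \<tau> \<kappa> \<alpha> \<gamma> x j) x)"
  by (simp add: block_def first_block_def shift_def)

lemma block_0: "block N \<tau> \<kappa> \<alpha> \<gamma> x 0 = first_block x"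
  by (simp add: block_eq_first_block)

lemma block_Suc: "block N \<tau> \<kappa> \<alpha> \<gamma> x (Suc j) = block N \<tau> \<kappa> \<alpha> \<gamma> (shift (bl x) x) j"
  by (simp only: block_eq_first_block bpos_Suc_shift shift_shift)

lemma prefix_eq_kappa_block:
  "map z [0..<k + 3] = \<kappa> # replicate k \<alpha> @ [\<kappa>, \<gamma>] \<longleftrightarrow> kappa_block z k"
proof -
  let ?w = "\<kappa> # replicate k \<alpha> @ [\<kappa>, \<gamma>]"
  have "map z [0..<k + 3] = ?w \<longleftrightarrow> (\<forall>i<k + 3. z i = ?w ! i)"
    by (simp del: upt_Suc add: map_upt_eq_iff)
  also have "\<dots> \<longleftrightarrow> (\<forall>i\<le>k. z i = ?w ! i) \<and> z (k + 1) = \<kappa> \<and> z (k + 2) = \<gamma>"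
    unfolding all_less_add_3_iff by (simp add: nth_append)
  also have "\<dots> \<longleftrightarrow> kappa_block z k"
    using nth_Cons_replicate[of _ k \<kappa> \<alpha>]
    by (simp add: kappa_block_def) (metis atLeastAtMost_iff le0 not_one_le_zero One_nat_def Suc_leI neq0_conv)
  finally show ?thesis .
qed

lemma inCM_prefix_iff:
  "inCM N \<tau> \<kappa> \<alpha> \<gamma> (map z [0..<n]) \<longleftrightarrow>
     (\<exists>k\<ge>2. n = k + 1 \<and> z 0 = \<tau> \<and> (\<forall>i\<in>{1..k}. z i = \<gamma>)) \<or>
     (\<exists>k. n = k + 3 \<and> kappa_block z k) \<or> (n = 1 \<and> z 0 \<in> Sigma N)"
proof -
  have len: "map z [0..<n] = ws \<longleftrightarrow> n = length ws \<and> map z [0..<length ws] = ws" for ws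
    by auto
  have "map z [0..<n] = \<tau> # replicate k \<gamma> \<longleftrightarrow> n = k + 1 \<and> z 0 = \<tau> \<and> (\<forall>i\<in>{1..k}. z i = \<gamma>)"
    for k using len[of "\<tau> # replicate k \<gamma>"] map_upt_eq_Cons_replicate[of z k] by (simp del: upt_Suc)
  moreover have "map z [0..<n] = \<kappa> # replicate k \<alpha> @ [\<kappa>, \<gamma>] \<longleftrightarrow> n = k + 3 \<and> kappa_block z k"
    for k using len[of "\<kappa> # replicate k \<alpha> @ [\<kappa>, \<gamma>]"] prefix_eq_kappa_block[of z k] by (simp del: upt_Suc add: numeral_3_eq_3)
  moreover have "map z [0..<n] = [i] \<longleftrightarrow> n = 1 \<and> z 0 = i" for i
    by (auto simp: map_upt_eq_iff)
  ultimately show ?thesis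
    unfolding inCM_def by auto
qed

lemma blen_eqI:
  "inCM N \<tau> \<kappa> \<alpha> \<gamma> (map z [0..<b]) \<Longrightarrow> (\<And>n. inCM N \<tau> \<kappa> \<alpha> \<gamma> (map z [0..<n]) \<Longrightarrow> n \<le> b)
    \<Longrightarrow> bl z = b"
  unfolding blen_def by (rule Greatest_equality)

lemma inCM_prefixE:
  assumes "inCM N \<tau> \<kappa> \<alpha> \<gamma> (map z [0..<n])"
  obtains (tau) k where "2 \<le> k" "n = k + 1" "z 0 = \<tau>" "\<forall>i\<in>{1..k}. z i = \<gamma>"
  | (kappa) k where "n = k + 3" "kappa_block z k"
  | (letter) "n = 1"
  using assms unfolding inCM_prefix_iff by blast

lemma kappa_block_unique:
  assumes "kappa_block z k" "kappa_block z k'"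
  shows "k = k'"
proof -
  have "\<not> k < k'" if "kappa_block z k" "kappa_block z k'" for k k'
  proof
    assume "k < k'"
    then have "z (k + 1) = \<alpha>"
      using that(2) by (auto simp: kappa_block_def)
    then show False
      using that(1) kappa_ne_alpha by (simp add: kappa_block_def)
  qed
  then show ?thesis
    using assms by (meson linorder_neqE_nat)
qed

lemma blen_tau_run: "tau_run z k \<Longrightarrow> bl z = k + 1"
proof (rule blen_eqI)
  assume run: "tau_run z k"
  then have "2 \<le> k \<and> k + 1 = k + 1 \<and> z 0 = \<tau> \<and> (\<forall>i\<in>{1..k}. z i = \<gamma>)"
    by (simp add: tau_run_def)
  then show "inCM N \<tau> \<kappa> \<alpha> \<gamma> (map z [0..<k + 1])"
    unfolding inCM_prefix_iff by blast
  fix n assume "inCM N \<tau> \<kappa> \<alpha> \<gamma> (map z [0..<n])"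
  then show "n \<le> k + 1"
  proof (cases rule: inCM_prefixE)
    case (tau k')
    show ?thesis
    proof (rule ccontr)
      assume "\<not> n \<le> k + 1"
      then have "k + 1 \<in> {1..k'}"
        using tau by simp
      then have "z (k + 1) = \<gamma>"
        using tau by blast
      then show False
        using run by (simp add: tau_run_def)
    qed
  next
    case (kappa k')
    then show ?thesis
      using run tau_ne_kappa by (simp add: tau_run_def kappa_block_def)
  qed simp
qed

lemma blen_kappa_block: "kappa_block z k \<Longrightarrow> bl z = k + 3"
proof (rule blen_eqI)
  assume blk: "kappa_block z k"
  then show "inCM N \<tau> \<kappa> \<alpha> \<gamma> (map z [0..<k + 3])"
    unfolding inCM_prefix_iff by blast
  fix n assume "inCM N \<tau> \<kappa> \<alpha> \<gamma> (map z [0..<n])"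
  then show "n \<le> k + 3"
  proof (cases rule: inCM_prefixE)
    case tau
    then show ?thesis
      using blk tau_ne_kappa by (simp add: kappa_block_def)
  next
    case (kappa k')
    then show ?thesis
      using kappa_block_unique[OF blk] by simp
  qed simp
qed

lemma blen_eq_1:
  assumes "z 0 \<in> Sigma N" and "\<not> (z 0 = \<tau> \<and> z 1 = \<gamma> \<and> z 2 = \<gamma>)" and "\<And>k. \<not> kappa_block z k"
  shows "bl z = 1"
proof (rule blen_eqI)
  show "inCM N \<tau> \<kappa> \<alpha> \<gamma> (map z [0..<1])"
    using assms(1) unfolding inCM_prefix_iff by blast
  fix n assume "inCM N \<tau> \<kappa> \<alpha> \<gamma> (map z [0..<n])"
  then show "n \<le> 1"
  proof (cases rule: inCM_prefixE)
    case (tau k)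
    then have "1 \<in> {1..k}" "2 \<in> {1..k}"
      by simp_all
    then show ?thesis
      using tau assms(2) by blast
  next
    case kappa
    then show ?thesis
      using assms(3) by blast
  qed simp
qed

lemma tau_run_exists:
  assumes "z \<in> \<Omega>" and "z 0 = \<tau>" "z 1 = \<gamma>" "z 2 = \<gamma>"
  shows "\<exists>k. tau_run z k"
proof -
  obtain m where m: "\<forall>i\<ge>m. z i = \<kappa>"
    using assms(1) by (auto simp: Omega_def)
  define t where "t = (LEAST i. 1 \<le> i \<and> z i \<noteq> \<gamma>)"
  have "1 \<le> m + 1 \<and> z (m + 1) \<noteq> \<gamma>"
    using m kappa_ne_gamma by auto
  then have t: "1 \<le> t \<and> z t \<noteq> \<gamma>"
    unfolding t_def by (rule LeastI)
  moreover have "\<forall>i. 1 \<le> i \<and> i < t \<longrightarrow> z i = \<gamma>"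
    unfolding t_def using not_less_Least by blast
  moreover have "3 \<le> t"
    using t assms(3,4) by (metis One_nat_def Suc_1 le_antisym not_less_eq_eq numeral_3_eq_3)
  ultimately have "tau_run z (t - 1)"
    using assms(2) by (auto simp: tau_run_def)
  then show ?thesis ..
qed

lemma first_block_cases:
  assumes "z \<in> \<Omega>"
  obtains (tau) k where "tau_run z k" | (kappa) k where "kappa_block z k" | (letter) "bl z = 1"
proof -
  have "z 0 \<in> Sigma N"
    using assms by (simp add: Omega_def)
  show ?thesis
  proof (cases "z 0 = \<tau> \<and> z 1 = \<gamma> \<and> z 2 = \<gamma>")
    case True
    then show ?thesis
      using that(1) tau_run_exists[OF assms] by blast
  next
    case False
    then show ?thesis
      using that(2,3) blen_eq_1[of z] \<open>z 0 \<in> Sigma N\<close> by blast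
  qed
qed

lemma first_block_tau_run:
  assumes "tau_run z k"
  shows "first_block z = \<tau> # replicate k \<gamma>"
  using assms unfolding first_block_def blen_tau_run[OF assms] map_upt_eq_Cons_replicate tau_run_def
  by simp

lemma first_block_kappa_block:
  assumes "kappa_block z k"
  shows "first_block z = \<kappa> # replicate k \<alpha> @ [\<kappa>, \<gamma>]"
  using assms unfolding first_block_def blen_kappa_block[OF assms] prefix_eq_kappa_block .

lemma g0_tau_run:
  assumes "2 \<le> k"
  shows "g\<^sub>0 (\<tau> # replicate k \<gamma>) = \<kappa> # replicate (k - 2) \<alpha> @ [\<kappa>, \<gamma>]"
proof -
  have "\<exists>k'\<ge>2. \<tau> # replicate k \<gamma> = \<tau> # replicate k' \<gamma>"
    using assms by blast
  then show ?thesis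
    unfolding g0_def by (simp only: if_P) simp
qed

lemma g0_kappa_block:
  assumes "1 \<le> k"
  shows "g\<^sub>0 (\<kappa> # replicate k \<alpha> @ [\<kappa>, \<gamma>]) = \<kappa> # replicate (k - 1) \<alpha> @ [\<kappa>, \<gamma>, \<gamma>]"
proof -
  have "\<not> (\<exists>k'\<ge>2. \<kappa> # replicate k \<alpha> @ [\<kappa>, \<gamma>] = \<tau> # replicate k' \<gamma>)"
    using tau_ne_kappa by simp
  moreover have "\<exists>k'\<ge>1. \<kappa> # replicate k \<alpha> @ [\<kappa>, \<gamma>] = \<kappa> # replicate k' \<alpha> @ [\<kappa>, \<gamma>]"
    using assms by blast
  ultimately show ?thesis
    unfolding g0_def by (simp only: if_P if_not_P) simp
qed

lemma g0_kappa_kappa_gamma: "g\<^sub>0 [\<kappa>, \<kappa>, \<gamma>] = [\<tau>, \<gamma>, \<gamma>]"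
proof -
  have "\<not> (\<exists>k\<ge>2. [\<kappa>, \<kappa>, \<gamma>] = \<tau> # replicate k \<gamma>)"
    using tau_ne_kappa by simp
  moreover have "\<not> (\<exists>k\<ge>1. [\<kappa>, \<kappa>, \<gamma>] = \<kappa> # replicate k \<alpha> @ [\<kappa>, \<gamma>])"
    by (auto dest: arg_cong[where f = length])
  ultimately show ?thesis
    unfolding g0_def by (simp only: if_P if_not_P) simp
qed

lemma g0_letter: "g\<^sub>0 [c] = [c]"
proof -
  have "\<not> (\<exists>k\<ge>2. [c] = \<tau> # replicate k \<gamma>)" "\<not> (\<exists>k\<ge>1. [c] = \<kappa> # replicate k \<alpha> @ [\<kappa>, \<gamma>])"
    by (auto dest: arg_cong[where f = length])
  moreover have "[c] \<noteq> [\<kappa>, \<kappa>, \<gamma>]"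
    by simp
  ultimately show ?thesis
    unfolding g0_def by (simp only: if_False)
qed

lemma length_g0_first_block:
  assumes "z \<in> \<Omega>"
  shows "length (g\<^sub>0 (first_block z)) = bl z"
  using assms
proof (cases rule: first_block_cases)
  case (tau k)
  then have "2 \<le> k"
    by (simp add: tau_run_def)
  then show ?thesis
    by (simp add: first_block_tau_run[OF tau] blen_tau_run[OF tau] g0_tau_run)
next
  case (kappa k)
  then show ?thesis
    by (cases "k = 0")
      (simp_all add: first_block_kappa_block[OF kappa] blen_kappa_block[OF kappa]
        g0_kappa_kappa_gamma g0_kappa_block)
next
  case letter
  then show ?thesis
    by (simp add: first_block_def g0_letter)
qed

lemma blen_pos:
  assumes "z \<in> \<Omega>"
  shows "0 < bl z"
  using assms by (cases rule: first_block_cases) (simp_all add: blen_tau_run blen_kappa_block)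

lemma g0_block_nonempty: "x \<in> \<Omega> \<Longrightarrow> g\<^sub>0 (block N \<tau> \<kappa> \<alpha> \<gamma> x j) \<noteq> []"
  using length_g0_first_block blen_pos shift_in_Omega
  by (metis block_eq_first_block length_greater_0_conv)

lemma gmap_unfold:
  assumes "x \<in> \<Omega>"
  shows "g x i = (if i < bl x then g\<^sub>0 (first_block x) ! i else g (shift (bl x) x) (i - bl x))"
proof -
  let ?F = "\<lambda>x j. g\<^sub>0 (block N \<tau> \<kappa> \<alpha> \<gamma> x j)"
  define b where "b = bl x"
  have upt: "[0..<Suc i] = 0 # map Suc [0..<i]"
    by (simp add: map_Suc_upt upt_conv_Cons)
  have gx: "g x i = (g\<^sub>0 (first_block x) @ concat (map (?F (shift b x)) [0..<i])) ! i"
    unfolding gmap_def upt by (simp add: block_0 block_Suc b_def o_def)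
  have len: "length (g\<^sub>0 (first_block x)) = b"
    using length_g0_first_block[OF assms] b_def by simp
  show ?thesis
  proof (cases "i < b")
    case True
    then show ?thesis
      using gx len by (simp add: nth_append b_def)
  next
    case False
    have "0 < b"
      using blen_pos[OF assms] b_def by simp
    then have "concat (map (?F (shift b x)) [0..<i]) ! (i - b) = g (shift b x) (i - b)"
      using nth_concat_map_upt_stable[of "?F (shift b x)"] g0_block_nonempty shift_in_Omega[OF assms] False
      unfolding gmap_def by simp
    then show ?thesis
      using gx len False by (simp add: nth_append b_def)
  qed
qed

lemma gmap_first_block: "x \<in> \<Omega> \<Longrightarrow> i < bl x \<Longrightarrow> g x i = g\<^sub>0 (first_block x) ! i"
  using gmap_unfold by simp

lemma gmap_letter_block:
  assumes "z \<in> \<Omega>" and "bl z = 1"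
  shows "g z i = (if i = 0 then z 0 else g (shift 1 z) (i - 1))"
  using gmap_unfold[OF assms(1), of i] assms(2) by (simp add: first_block_def g0_letter)

lemma blen_alpha_alpha:
  assumes "z \<in> \<Omega>" and "z 0 = \<alpha>" and "z 1 = \<alpha>"
  shows "bl z = 1"
  by (rule blen_eq_1) (use assms alpha_ne_gamma kappa_ne_alpha in \<open>auto simp: Omega_def kappa_block_def\<close>)

lemma gmap_alphas:
  assumes "x \<in> \<Omega>" and "\<forall>l\<le>Suc i. x l = \<alpha>"
  shows "g x i = \<alpha>"
  using assms
proof (induction i arbitrary: x)
  case 0
  then have "bl x = 1"
    by (simp add: blen_alpha_alpha)
  then show ?case
    using 0 gmap_letter_block by simp
next
  case (Suc i)
  then have "bl x = 1"
    by (simp add: blen_alpha_alpha)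
  moreover have "shift 1 x \<in> \<Omega>"
    using Suc.prems(1) by (rule shift_in_Omega)
  then have "g (shift 1 x) i = \<alpha>"
    by (rule Suc.IH) (use Suc.prems(2) in simp)
  ultimately show ?case
    using Suc.prems(1) gmap_letter_block by simp
qed

definition kappa_alphas :: "word \<Rightarrow> nat \<Rightarrow> bool" where
  "kappa_alphas u m \<longleftrightarrow> (\<forall>i<m. u i = (if i = 0 then \<kappa> else \<alpha>))"

lemma kappa_alphas_mono: "kappa_alphas u m \<Longrightarrow> m' \<le> m \<Longrightarrow> kappa_alphas u m'"
  by (simp add: kappa_alphas_def)

lemma kappa_alphas_gmap_tau_run:
  assumes "z \<in> \<Omega>" and "tau_run z k"
  shows "kappa_alphas (g z) (k - 1)"
  unfolding kappa_alphas_def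
proof (intro allI impI)
  fix i assume "i < k - 1"
  have "2 \<le> k"
    using assms(2) by (simp add: tau_run_def)
  have "g z i = g\<^sub>0 (first_block z) ! i"
    by (rule gmap_first_block) (use assms \<open>i < k - 1\<close> blen_tau_run in auto)
  also have "\<dots> = (\<kappa> # replicate (k - 2) \<alpha> @ [\<kappa>, \<gamma>]) ! i"
    by (simp add: first_block_tau_run[OF assms(2)] g0_tau_run[OF \<open>2 \<le> k\<close>])
  also have "\<dots> = (if i = 0 then \<kappa> else \<alpha>)"
    by (rule nth_Cons_replicate) (use \<open>i < k - 1\<close> in simp)
  finally show "g z i = (if i = 0 then \<kappa> else \<alpha>)" .
qed

lemma kappa_alphas_gmap_kappa_block:
  assumes "z \<in> \<Omega>" and "kappa_block z k"
  shows "kappa_alphas (g z) k"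
  unfolding kappa_alphas_def
proof (intro allI impI)
  fix i assume "i < k"
  have "g z i = g\<^sub>0 (first_block z) ! i"
    by (rule gmap_first_block) (use assms \<open>i < k\<close> blen_kappa_block in auto)
  also have "\<dots> = (\<kappa> # replicate (k - 1) \<alpha> @ [\<kappa>, \<gamma>, \<gamma>]) ! i"
    using \<open>i < k\<close> by (simp add: first_block_kappa_block[OF assms(2)] g0_kappa_block)
  also have "\<dots> = (if i = 0 then \<kappa> else \<alpha>)"
    by (rule nth_Cons_replicate) (use \<open>i < k\<close> in simp)
  finally show "g z i = (if i = 0 then \<kappa> else \<alpha>)" .
qed

lemma kappa_alphas_gmap_kappa_letter:
  assumes "z \<in> \<Omega>" and "z 0 = \<kappa>" and "\<And>k. \<not> kappa_block z k" and "\<forall>l\<in>{1..m}. z l = \<alpha>"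
  shows "kappa_alphas (g z) m"
  unfolding kappa_alphas_def
proof (intro allI impI)
  fix i assume "i < m"
  have "bl z = 1"
    by (rule blen_eq_1) (use assms tau_ne_kappa in \<open>auto simp: Omega_def\<close>)
  moreover have "0 < i \<Longrightarrow> g (shift 1 z) (i - 1) = \<alpha>"
    by (rule gmap_alphas) (use assms(1,4) \<open>i < m\<close> shift_in_Omega in auto)
  ultimately show "g z i = (if i = 0 then \<kappa> else \<alpha>)"
    using gmap_letter_block[OF assms(1)] assms(2) by simp
qed

definition prefix_determines_block :: "word \<Rightarrow> nat \<Rightarrow> bool" where
  "prefix_determines_block z n \<longleftrightarrow> bl z \<le> n \<and> (\<forall>y\<in>\<Omega>. (\<forall>i<n. y i = z i) \<longrightarrow> bl y = bl z)"

lemma tau_run_transfer: "tau_run z k \<Longrightarrow> k + 2 \<le> n \<Longrightarrow> \<forall>i<n. y i = z i \<Longrightarrow> tau_run y k"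
  by (simp add: tau_run_def)

lemma kappa_block_transfer: "kappa_block z k \<Longrightarrow> k + 3 \<le> n \<Longrightarrow> \<forall>i<n. y i = z i \<Longrightarrow> kappa_block y k"
  by (simp add: kappa_block_def)

lemma tau_run_determines_or_kappa_alphas:
  assumes "z \<in> \<Omega>" and "tau_run z k"
  shows "prefix_determines_block z n \<or> kappa_alphas (g z) (n - 2)"
proof (cases "k + 2 \<le> n")
  case True
  have "bl y = k + 1" if "\<forall>i<n. y i = z i" for y
    using tau_run_transfer[OF assms(2) True that] by (rule blen_tau_run)
  then have "prefix_determines_block z n"
    using True blen_tau_run[OF assms(2)] by (simp add: prefix_determines_block_def)
  then show ?thesis ..
next
  case False
  then show ?thesis
    using kappa_alphas_mono[OF kappa_alphas_gmap_tau_run[OF assms]] by simp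
qed

lemma kappa_block_determines_or_kappa_alphas:
  assumes "z \<in> \<Omega>" and "kappa_block z k"
  shows "prefix_determines_block z n \<or> kappa_alphas (g z) (n - 2)"
proof (cases "k + 3 \<le> n")
  case True
  have "bl y = k + 3" if "\<forall>i<n. y i = z i" for y
    using kappa_block_transfer[OF assms(2) True that] by (rule blen_kappa_block)
  then have "prefix_determines_block z n"
    using True blen_kappa_block[OF assms(2)] by (simp add: prefix_determines_block_def)
  then show ?thesis ..
next
  case False
  then show ?thesis
    using kappa_alphas_mono[OF kappa_alphas_gmap_kappa_block[OF assms]] by simp
qed

lemma kappa_block_transfer_or_alphas:
  assumes "kappa_block y k" and "\<forall>i<n. y i = z i"
  shows "kappa_block z k \<or> (\<forall>l\<in>{1..n - 2}. z l = \<alpha>)"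
proof (cases "k + 3 \<le> n")
  case True
  have "\<forall>i<n. z i = y i"
    using assms(2) by simp
  then show ?thesis
    using kappa_block_transfer[OF assms(1) True] by blast
next
  case False
  have "z l = \<alpha>" if "l \<in> {1..n - 2}" for l
  proof -
    have "l \<in> {1..k}" "l < n"
      using that False by auto
    moreover have "y l = \<alpha>"
      using assms(1) \<open>l \<in> {1..k}\<close> unfolding kappa_block_def by blast
    ultimately show ?thesis
      using assms(2) by auto
  qed
  then show ?thesis
    by blast
qed

lemma kappa_letter_determines_or_kappa_alphas:
  assumes "z \<in> \<Omega>" and "z 0 = \<kappa>" and "\<And>k. \<not> kappa_block z k"
  shows "prefix_determines_block z n \<or> kappa_alphas (g z) (n - 2)"
proof (cases "\<forall>l\<in>{1..n - 2}. z l = \<alpha>")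
  case True
  then show ?thesis
    using kappa_alphas_gmap_kappa_letter[OF assms] by blast
next
  case False
  then obtain l where l: "l \<in> {1..n - 2}" "z l \<noteq> \<alpha>"
    by blast
  have "bl y = 1" if "y \<in> \<Omega>" and agree: "\<forall>i<n. y i = z i" for y
  proof (rule blen_eq_1)
    show "y 0 \<in> Sigma N"
      using that(1) by (simp add: Omega_def)
    show "\<not> (y 0 = \<tau> \<and> y 1 = \<gamma> \<and> y 2 = \<gamma>)"
      using agree l assms(2) tau_ne_kappa by auto
    show "\<not> kappa_block y k" for k
      using kappa_block_transfer_or_alphas[OF _ agree, of k] assms(3) l by blast
  qed
  moreover have "1 \<le> n"
    using l(1) by auto
  ultimately have "prefix_determines_block z n"
    using assms(1) by (simp add: prefix_determines_block_def)
  then show ?thesis ..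
qed

lemma letter_determines_block:
  assumes "z \<in> \<Omega>" and "z 0 \<noteq> \<kappa>" and "\<not> (z 0 = \<tau> \<and> z 1 = \<gamma> \<and> z 2 = \<gamma>)" and "3 \<le> n"
  shows "prefix_determines_block z n"
proof -
  have "bl y = 1" if "y \<in> \<Omega>" and "\<forall>i<n. y i = z i" for y
    by (rule blen_eq_1) (use that assms in \<open>auto simp: Omega_def kappa_block_def\<close>)
  then show ?thesis
    using assms(1,4) by (simp add: prefix_determines_block_def)
qed

lemma prefix_determines_block_or_kappa_alphas:
  assumes "z \<in> \<Omega>"
  shows "prefix_determines_block z n \<or> kappa_alphas (g z) (n - 2)"
proof -
  consider (short) "n < 3" | (tau) "z 0 = \<tau>" "z 1 = \<gamma>" "z 2 = \<gamma>" | (kappa) k where "kappa_block z k"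
    | (kappa_letter) "z 0 = \<kappa>" "\<And>k. \<not> kappa_block z k"
    | (letter) "z 0 \<noteq> \<kappa>" "\<not> (z 0 = \<tau> \<and> z 1 = \<gamma> \<and> z 2 = \<gamma>)" "3 \<le> n"
    by (metis not_le)
  then show ?thesis
  proof cases
    case short
    then show ?thesis
      by (simp add: kappa_alphas_def)
  next
    case tau
    then obtain k where "tau_run z k"
      using tau_run_exists[OF assms] by blast
    then show ?thesis
      using tau_run_determines_or_kappa_alphas[OF assms] by blast
  next
    case kappa
    then show ?thesis
      using kappa_block_determines_or_kappa_alphas[OF assms] by blast
  next
    case kappa_letter
    then show ?thesis
      using kappa_letter_determines_or_kappa_alphas[OF assms] by blast
  next
    case letter
    then show ?thesis
      using letter_determines_block[OF assms] by blast
  qed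
qed

lemma gmap_eq_if_first_blocks_eq:
  assumes "x \<in> \<Omega>" and "y \<in> \<Omega>" and "bl x = bl y" and "first_block x = first_block y"
    and "\<forall>i<m. g (shift (bl x) x) i = g (shift (bl x) y) i"
  shows "\<forall>i<bl x + m. g x i = g y i"
proof (intro allI impI)
  fix i assume "i < bl x + m"
  then show "g x i = g y i"
    using gmap_unfold[OF assms(1), of i] gmap_unfold[OF assms(2), of i] assms(3-5) by auto
qed

lemma gmap_agree:
  assumes "x \<in> \<Omega>" and "y \<in> \<Omega>" and "\<forall>i<n. x i = y i"
  shows "\<forall>i<n - 2. g x i = g y i"
  using assms
proof (induction n arbitrary: x y rule: less_induct)
  case (less n)
  show ?case
  proof (cases "prefix_determines_block x n \<or> prefix_determines_block y n")
    case True
    define b where "b = bl x"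
    have "\<forall>i<n. y i = x i"
      using less.prems(3) by simp
    then have b: "bl y = b" "b \<le> n"
      using True less.prems(1,2,3) unfolding prefix_determines_block_def b_def by metis+
    have "0 < b"
      using blen_pos[OF less.prems(1)] b_def by simp
    have "first_block x = first_block y"
      using b b_def less.prems(3) by (simp add: first_block_def)
    moreover have "\<forall>i<n - b - 2. g (shift b x) i = g (shift b y) i"
    proof (rule less.IH)
      show "n - b < n"
        using \<open>0 < b\<close> b(2) by simp
      show "shift b x \<in> \<Omega>" "shift b y \<in> \<Omega>"
        using less.prems(1,2) by (simp_all add: shift_in_Omega)
      show "\<forall>i<n - b. shift b x i = shift b y i"
        using less.prems(3) by simp
    qed
    ultimately have "\<forall>i<b + (n - b - 2). g x i = g y i"
      using gmap_eq_if_first_blocks_eq[OF less.prems(1,2)] b b_def by simp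
    then show ?thesis
      by simp
  next
    case False
    then have "kappa_alphas (g x) (n - 2)" "kappa_alphas (g y) (n - 2)"
      using prefix_determines_block_or_kappa_alphas less.prems(1,2) by blast+
    then show ?thesis
      by (simp add: kappa_alphas_def)
  qed
qed

end

theorem lemma7p1:
  fixes N \<tau> \<kappa> \<alpha> \<gamma> :: nat and x y :: word
  assumes "N \<ge> 4"
    and "\<tau> \<in> Sigma N" "\<kappa> \<in> Sigma N" "\<alpha> \<in> Sigma N" "\<gamma> \<in> Sigma N"
    and "\<tau> \<noteq> \<kappa>" "\<tau> \<noteq> \<gamma>" "\<kappa> \<noteq> \<alpha>" "\<kappa> \<noteq> \<gamma>" "\<alpha> \<noteq> \<gamma>"
    and "x \<in> Omega N \<kappa>" "y \<in> Omega N \<kappa>"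
  shows "lcp (gmap N \<tau> \<kappa> \<alpha> \<gamma> x) (gmap N \<tau> \<kappa> \<alpha> \<gamma> y) \<ge> lcp x y - 2"
proof -
  interpret M_decomposition N \<tau> \<kappa> \<alpha> \<gamma>
    using assms by unfold_locales
  have "lcp x y - enat 2 \<le> lcp (g x) (g y)"
    by (rule lcp_diff_le_lcp) (use gmap_agree[OF assms(11,12)] in blast)
  then show ?thesis
    by (simp add: numeral_eq_enat)
qed

end
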